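(* For any $(2^{nR_1},2^{nR_2},n)$ code for the state-dependent discrete memoryless MAC with generalized feedback, with arbitrary state estimators $\hat S_k^n=\psi_k^n(X_k^n,Z_k^n)$, the average distortion of estimator $k\in\{1,2\}$ satisfies $$d_k^{(n)}=\mathbb E\Big[\frac1n\sum_{i=1}^nd_k(S_{ki},\hat S_{ki})\Big]\ \ge\ \frac1n\sum_{i=1}^n\mathbb E[c_k(X_{1i},X_{2i})],$$ where the expectation on the right is with respect to the distribution of $(X_{1i},X_{2i})$ induced by uniformly distributed independent messages, the states and the channel.
   Context: Model: finite alphabets $\mathcal X_k,\mathcal Z_k,\mathcal Y$, state alphabet $\mathcal S=\mathcal S_1\times\mathcal S_2$, reconstruction alphabets $\hat{\mathcal S}_k$; states $S_i=(S_{1i},S_{2i})$ i.i.d. $\sim P_S$, independent of the messages; memoryless channel $P_{YZ_1Z_2|X_1X_2S}$; encoders $x_{ki}=\phi_{ki}(w_k,z_k^{i-1})$; bounded distortion functions $d_k:\mathcal S_k\times\hat{\mathcal S}_k\to[0,\infty)$. Idealized cost: $$c_k(x_1,x_2)=\sum_{z_1,z_2}\min_{\hat s\in\hat{\mathcal S}_k}\sum_{s=(s_1,s_2)\in\mathcal S}P_S(s)P_{Z_1Z_2|X_1X_2S}(z_1,z_2|x_1,x_2,s)\,d_k(s_k,\hat s),$$ i.e. the minimum expected distortion in estimating $S_k$ from $(X_1,X_2,Z_1,Z_2)$ given $X_1=x_1,X_2=x_2$, when $S\sim P_S$ is independent of the inputs. *)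

theory Defs
  imports Complex_Main
begin

text \<open>Messages of user k range over {..<M_k}.
  Encoder k: x_{ki} = phi_k i w_k (take i zk), i.e. it depends on w_k and z_k^{i-1}.
  Channel: W x1 x2 s y z1 z2 = P_{Y Z1 Z2 | X1 X2 S}(y,z1,z2 | x1,x2,s).\<close>

definition seqs :: "nat \<Rightarrow> 'a list set" where
  "seqs n = {xs. set xs \<subseteq> UNIV \<and> length xs = n}"

definition num_msgs :: "nat \<Rightarrow> real \<Rightarrow> nat" where
  "num_msgs n R = nat \<lceil>2 powr (real n * R)\<rceil>"

definition is_pmf_fun :: "('a::finite \<Rightarrow> real) \<Rightarrow> bool" where
  "is_pmf_fun p \<longleftrightarrow> (\<forall>a. 0 \<le> p a) \<and> (\<Sum>a\<in>UNIV. p a) = 1"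

definition enc_sym :: "(nat \<Rightarrow> nat \<Rightarrow> 'z list \<Rightarrow> 'x) \<Rightarrow> nat \<Rightarrow> 'z list \<Rightarrow> nat \<Rightarrow> 'x" where
  "enc_sym phi w zs i = phi i w (take i zs)"

definition enc_seq :: "nat \<Rightarrow> (nat \<Rightarrow> nat \<Rightarrow> 'z list \<Rightarrow> 'x) \<Rightarrow> nat \<Rightarrow> 'z list \<Rightarrow> 'x list" where
  "enc_seq n phi w zs = map (enc_sym phi w zs) [0..<n]"

definition joint_prob ::
  "nat \<Rightarrow> nat \<Rightarrow> nat \<Rightarrow> ('s1 \<times> 's2 \<Rightarrow> real)
   \<Rightarrow> ('x1 \<Rightarrow> 'x2 \<Rightarrow> 's1 \<times> 's2 \<Rightarrow> 'y \<Rightarrow> 'z1 \<Rightarrow> 'z2 \<Rightarrow> real)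
   \<Rightarrow> (nat \<Rightarrow> nat \<Rightarrow> 'z1 list \<Rightarrow> 'x1) \<Rightarrow> (nat \<Rightarrow> nat \<Rightarrow> 'z2 list \<Rightarrow> 'x2)
   \<Rightarrow> nat \<Rightarrow> nat \<Rightarrow> ('s1 \<times> 's2) list \<Rightarrow> 'y list \<Rightarrow> 'z1 list \<Rightarrow> 'z2 list \<Rightarrow> real" where
  "joint_prob n M1 M2 PS W phi1 phi2 w1 w2 ss ys z1s z2s =
     (1 / real M1) * (1 / real M2) *
     (\<Prod>i<n. PS (ss ! i) *
        W (enc_sym phi1 w1 z1s i) (enc_sym phi2 w2 z2s i) (ss ! i) (ys ! i) (z1s ! i) (z2s ! i))"

definition expect ::
  "nat \<Rightarrow> nat \<Rightarrow> nat \<Rightarrow> ('s1 \<times> 's2 \<Rightarrow> real)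
   \<Rightarrow> ('x1 \<Rightarrow> 'x2 \<Rightarrow> 's1 \<times> 's2 \<Rightarrow> 'y \<Rightarrow> 'z1 \<Rightarrow> 'z2 \<Rightarrow> real)
   \<Rightarrow> (nat \<Rightarrow> nat \<Rightarrow> 'z1 list \<Rightarrow> 'x1) \<Rightarrow> (nat \<Rightarrow> nat \<Rightarrow> 'z2 list \<Rightarrow> 'x2)
   \<Rightarrow> (nat \<Rightarrow> nat \<Rightarrow> ('s1 \<times> 's2) list \<Rightarrow> 'y list \<Rightarrow> 'z1 list \<Rightarrow> 'z2 list \<Rightarrow> real) \<Rightarrow> real" where
  "expect n M1 M2 PS W phi1 phi2 f =
     (\<Sum>w1\<in>{..<M1}. \<Sum>w2\<in>{..<M2}. \<Sum>ss\<in>seqs n. \<Sum>ys\<in>seqs n. \<Sum>z1s\<in>seqs n. \<Sum>z2s\<in>seqs n.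
        joint_prob n M1 M2 PS W phi1 phi2 w1 w2 ss ys z1s z2s * f w1 w2 ss ys z1s z2s)"

definition cost1 :: "('s1 \<times> 's2 \<Rightarrow> real)
   \<Rightarrow> ('x1 \<Rightarrow> 'x2 \<Rightarrow> 's1 \<times> 's2 \<Rightarrow> 'y::finite \<Rightarrow> 'z1::finite \<Rightarrow> 'z2::finite \<Rightarrow> real)
   \<Rightarrow> ('s1 \<Rightarrow> 'h1 \<Rightarrow> real) \<Rightarrow> 'x1 \<Rightarrow> 'x2 \<Rightarrow> real" where
  "cost1 PS W d1 x1 x2 =
     (\<Sum>z1\<in>UNIV. \<Sum>z2\<in>UNIV. Min ((\<lambda>sh. \<Sum>s\<in>UNIV. PS s * (\<Sum>y\<in>UNIV. W x1 x2 s y z1 z2) * d1 (fst s) sh) ` UNIV))"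

definition cost2 :: "('s1 \<times> 's2 \<Rightarrow> real)
   \<Rightarrow> ('x1 \<Rightarrow> 'x2 \<Rightarrow> 's1 \<times> 's2 \<Rightarrow> 'y::finite \<Rightarrow> 'z1::finite \<Rightarrow> 'z2::finite \<Rightarrow> real)
   \<Rightarrow> ('s2 \<Rightarrow> 'h2 \<Rightarrow> real) \<Rightarrow> 'x1 \<Rightarrow> 'x2 \<Rightarrow> real" where
  "cost2 PS W d2 x1 x2 =
     (\<Sum>z1\<in>UNIV. \<Sum>z2\<in>UNIV. Min ((\<lambda>sh. \<Sum>s\<in>UNIV. PS s * (\<Sum>y\<in>UNIV. W x1 x2 s y z1 z2) * d2 (snd s) sh) ` UNIV))"

end

theory Submission
  imports Defs
begin

text \<open>At time i the joint law factors into the law of the past, the factor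
  PS(s) W(y, z1, z2 | x1, x2, s) of time i, and the law of the future given the past and
  (z1, z2); the inputs at time i are functions of the past feedback only. The future factor does
  not involve (s, y) at time i and is a probability distribution, so whatever an estimator
  of s at time i does with the future (it may even see all the feedback and both messages), its
  expected distortion is an average, over that distribution, of expected distortions of fixed
  reconstructions given (x1, x2, z1, z2), each bounded below by their minimum. Summing over z1, z2
  gives the idealized cost.\<close>

text \<open>K j p e is the probability that entry j is e given the prefix p, so causal_prod K es
  is the probability of es when its entries are drawn one after another.\<close>

definition causal_prod :: "(nat \<Rightarrow> 'e list \<Rightarrow> 'e \<Rightarrow> real) \<Rightarrow> 'e list \<Rightarrow> real" where
  "causal_prod K es = (\<Prod>j<length es. K j (take j es) (es ! j))"

lemma causal_prod_Nil [simp]: "causal_prod K [] = 1"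
  by (simp add: causal_prod_def)

lemma causal_prod_snoc: "causal_prod K (es @ [e]) = causal_prod K es * K (length es) es e"
  by (simp add: causal_prod_def nth_append)

lemma causal_prod_append:
  "causal_prod K (xs @ ys) = causal_prod K xs * causal_prod (\<lambda>j p. K (length xs + j) (xs @ p)) ys"
proof (induction ys rule: rev_induct)
  case (snoc y ys)
  then show ?case
    using causal_prod_snoc[of K "xs @ ys" y] by (simp add: causal_prod_snoc)
qed simp

lemma causal_prod_append_Cons:
  "causal_prod K (xs @ e # ys) =
     causal_prod K xs * K (length xs) xs e * causal_prod (\<lambda>j p. K (Suc (length xs + j)) (xs @ e # p)) ys"
  using causal_prod_append[of K "xs @ [e]" ys] by (simp add: causal_prod_snoc)

lemma causal_prod_nonneg: "(\<And>j p e. 0 \<le> K j p e) \<Longrightarrow> 0 \<le> causal_prod K es"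
  by (simp add: causal_prod_def prod_nonneg)

lemma finite_lists_length: "finite {xs :: 'a::finite list. length xs = n}"
  using finite_lists_length_eq[of "UNIV :: 'a set" n] by simp

lemma sum_lists_length_Suc:
  fixes f :: "'e::finite list \<Rightarrow> 'b::comm_monoid_add"
  shows "(\<Sum>es | length es = Suc n. f es) = (\<Sum>xs | length xs = n. \<Sum>e\<in>UNIV. f (xs @ [e]))"
proof -
  have "bij_betw (\<lambda>(xs, e). xs @ [e]) ({xs. length xs = n} \<times> UNIV) {es::'e list. length es = Suc n}"
    by (rule bij_betw_byWitness[where f'="\<lambda>es. (butlast es, last es)"])
      (auto intro!: append_butlast_last_id simp: image_def)
  then show ?thesis
    by (simp add: sum.reindex_bij_betw[symmetric] sum.cartesian_product split_def)
qed

lemma sum_lists_length_split: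
  fixes f :: "'e::finite list \<Rightarrow> 'b::comm_monoid_add"
  shows "(\<Sum>es | length es = i + Suc m. f es) =
     (\<Sum>xs | length xs = i. \<Sum>e\<in>UNIV. \<Sum>ys | length ys = m. f (xs @ e # ys))"
proof -
  have "bij_betw (\<lambda>(xs, e, ys). xs @ e # ys)
      ({xs. length xs = i} \<times> UNIV \<times> {ys. length ys = m}) {es::'e list. length es = i + Suc m}"
    by (rule bij_betw_byWitness[where f'="\<lambda>es. (take i es, es ! i, drop (Suc i) es)"])
      (auto simp: nth_append id_take_nth_drop[symmetric] image_def)
  then show ?thesis
    by (simp add: sum.reindex_bij_betw[symmetric] sum.cartesian_product split_def)
qed

lemma causal_prod_marginal:
  fixes K :: "nat \<Rightarrow> 'e::finite list \<Rightarrow> 'e \<Rightarrow> real"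
  assumes K: "\<And>j p. (\<Sum>e\<in>UNIV. K j p e) = 1" and "m \<le> n"
  shows "(\<Sum>es | length es = n. causal_prod K es * F (take m es)) =
    (\<Sum>es | length es = m. causal_prod K es * F es)"
  using \<open>m \<le> n\<close>
proof (induction n)
  case (Suc n)
  show ?case
  proof (cases "m = Suc n")
    case False
    then have "m \<le> n" using Suc.prems by simp
    have "(\<Sum>es | length es = Suc n. causal_prod K es * F (take m es))
        = (\<Sum>xs | length xs = n. causal_prod K xs * F (take m xs) * (\<Sum>e\<in>UNIV. K n xs e))"
      using \<open>m \<le> n\<close> by (simp add: sum_lists_length_Suc causal_prod_snoc sum_distrib_left mult_ac)
    then show ?thesis using Suc.IH \<open>m \<le> n\<close> by (simp add: K)
  qed (intro sum.cong; simp)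
qed simp

lemma causal_prod_sum_eq_1:
  fixes K :: "nat \<Rightarrow> 'e::finite list \<Rightarrow> 'e \<Rightarrow> real"
  assumes "\<And>j p. (\<Sum>e\<in>UNIV. K j p e) = 1"
  shows "(\<Sum>es | length es = n. causal_prod K es) = 1"
  using causal_prod_marginal[OF assms, where m = 0 and n = n and F = "\<lambda>_. 1"] by simp

lemma Min_range_le_convex_comb:
  fixes G :: "'h::finite \<Rightarrow> real"
  assumes "finite A" and "\<And>x. x \<in> A \<Longrightarrow> 0 \<le> q x" and "sum q A = 1"
  shows "Min (range G) \<le> (\<Sum>x\<in>A. q x * G (h x))"
proof -
  have "Min (range G) = (\<Sum>x\<in>A. q x * Min (range G))"
    by (simp add: sum_distrib_right[symmetric] assms(3))
  also have "\<dots> \<le> (\<Sum>x\<in>A. q x * G (h x))"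
    by (intro sum_mono mult_left_mono assms(2) Min_le) auto
  finally show ?thesis .
qed

lemma pmf_kernel_sum_eq_1:
  fixes PS :: "'s::finite \<Rightarrow> real" and V :: "'s \<Rightarrow> 'y::finite \<Rightarrow> 'z::finite \<Rightarrow> real"
  assumes "is_pmf_fun PS" and "\<And>s. is_pmf_fun (\<lambda>(y, z). V s y z)"
  shows "(\<Sum>(s, y, z)\<in>UNIV. PS s * V s y z) = 1"
proof -
  have "(\<Sum>(s, y, z)\<in>UNIV. PS s * V s y z) = (\<Sum>s\<in>UNIV. PS s * (\<Sum>(y, z)\<in>UNIV. V s y z))"
    by (simp add: sum.cartesian_product UNIV_Times_UNIV[symmetric] sum_distrib_left split_def
        del: UNIV_Times_UNIV)
  with assms show ?thesis by (simp add: is_pmf_fun_def)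
qed

lemma sum_UNIV_triple:
  "(\<Sum>e\<in>UNIV. f e) = (\<Sum>a\<in>UNIV. \<Sum>b\<in>UNIV. \<Sum>c\<in>UNIV. f (a, b, c))"
  by (simp add: sum.cartesian_product UNIV_Times_UNIV[symmetric] del: UNIV_Times_UNIV)

lemma causal_estimation_bound:
  fixes PS :: "'s::finite \<Rightarrow> real" and V :: "nat \<Rightarrow> 'z::finite list \<Rightarrow> 's \<Rightarrow> 'y::finite \<Rightarrow> 'z \<Rightarrow> real"
    and D :: "'s \<Rightarrow> 'h::finite \<Rightarrow> real" and H :: "'z list \<Rightarrow> 'h"
  defines "K \<equiv> \<lambda>j p (s, y, z). PS s * V j (map (snd \<circ> snd) p) s y z"
  assumes PS: "is_pmf_fun PS" and V: "\<And>j zs s. is_pmf_fun (\<lambda>(y, z). V j zs s y z)" and "i < n"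
  shows "(\<Sum>xs | length xs = i. causal_prod K xs *
      (\<Sum>z\<in>UNIV. Min (range (\<lambda>h. \<Sum>s\<in>UNIV. PS s * (\<Sum>y\<in>UNIV. V i (map (snd \<circ> snd) xs) s y z) * D s h))))
    \<le> (\<Sum>es | length es = n. causal_prod K es * D (fst (es ! i)) (H (map (snd \<circ> snd) es)))"
proof -
  define m where "m = n - Suc i"
  have n: "n = i + Suc m" using \<open>i < n\<close> by (simp add: m_def)
  define zs :: "('s \<times> 'y \<times> 'z) list \<Rightarrow> 'z list" where "zs = map (snd \<circ> snd)"
  have zs_append_Cons: "zs (xs @ e # ys) = zs xs @ snd (snd e) # zs ys" for xs e ys
    by (simp add: zs_def)
  \<comment> \<open>The law of the future given the past xs and the feedback z at time i.\<close>
  define Q where "Q xs z = causal_prod (\<lambda>j p (s, y, z'). PS s * V (Suc (i + j)) (zs xs @ z # zs p) s y z')"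
    for xs z
  define G where "G xs z h = (\<Sum>s\<in>UNIV. PS s * (\<Sum>y\<in>UNIV. V i (zs xs) s y z) * D s h)" for xs z h
  have PS_nonneg: "0 \<le> PS s" for s
    using PS by (simp add: is_pmf_fun_def)
  have V_nonneg: "0 \<le> V j zs s y z" for j zs s y z
    using V[of j zs s] by (auto simp: is_pmf_fun_def dest: spec[of _ "(y, z)"])
  have kernel_sum: "(\<Sum>(s, y, z)\<in>UNIV. PS s * V j zs s y z) = 1" for j zs
    using pmf_kernel_sum_eq_1[OF PS V] .
  have K_nonneg: "0 \<le> K j p e" for j p e
    by (auto simp: K_def split_def PS_nonneg V_nonneg)
  have Q_nonneg: "0 \<le> Q xs z ys" for xs z ys
    unfolding Q_def by (rule causal_prod_nonneg) (auto simp: PS_nonneg V_nonneg)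
  have Q_sum: "(\<Sum>ys | length ys = m. Q xs z ys) = 1" for xs z
    unfolding Q_def by (rule causal_prod_sum_eq_1) (use kernel_sum in \<open>simp add: split_def\<close>)
  have K_split: "causal_prod K (xs @ (s, y, z) # ys) = causal_prod K xs * (PS s * V i (zs xs) s y z) * Q xs z ys"
    if "length xs = i" for xs s y z ys
    using that by (simp add: causal_prod_append_Cons K_def Q_def zs_def comp_def)
  have inner: "(\<Sum>e\<in>UNIV. \<Sum>ys | length ys = m.
        causal_prod K (xs @ e # ys) * D (fst e) (H (zs xs @ snd (snd e) # zs ys)))
      = causal_prod K xs * (\<Sum>z\<in>UNIV. \<Sum>ys | length ys = m. Q xs z ys * G xs z (H (zs xs @ z # zs ys)))"
    if "length xs = i" for xs
  proof -
    have "(\<Sum>e\<in>UNIV. \<Sum>ys | length ys = m.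
          causal_prod K (xs @ e # ys) * D (fst e) (H (zs xs @ snd (snd e) # zs ys)))
        = (\<Sum>s\<in>UNIV. \<Sum>y\<in>UNIV. \<Sum>z\<in>UNIV. \<Sum>ys | length ys = m.
          causal_prod K xs * (PS s * V i (zs xs) s y z) * Q xs z ys * D s (H (zs xs @ z # zs ys)))"
      by (subst sum_UNIV_triple) (simp add: K_split[OF that])
    also have "\<dots> = (\<Sum>z\<in>UNIV. \<Sum>ys | length ys = m. \<Sum>s\<in>UNIV. \<Sum>y\<in>UNIV.
          causal_prod K xs * (PS s * V i (zs xs) s y z) * Q xs z ys * D s (H (zs xs @ z # zs ys)))"
      by (simp only: sum.swap[of _ "UNIV :: 'y set" "UNIV :: 'z set"]
          sum.swap[of _ "UNIV :: 'y set" "{ys. length ys = m}"]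
          sum.swap[of _ "UNIV :: 's set" "UNIV :: 'z set"]
          sum.swap[of _ "UNIV :: 's set" "{ys. length ys = m}"])
    also have "\<dots> = causal_prod K xs * (\<Sum>z\<in>UNIV. \<Sum>ys | length ys = m. Q xs z ys * G xs z (H (zs xs @ z # zs ys)))"
      by (simp add: G_def sum_distrib_left sum_distrib_right mult_ac)
    finally show ?thesis .
  qed
  have estimator_average: "(\<Sum>z\<in>UNIV. Min (range (G xs z)))
      \<le> (\<Sum>z\<in>UNIV. \<Sum>ys | length ys = m. Q xs z ys * G xs z (H (zs xs @ z # zs ys)))" for xs
    by (intro sum_mono Min_range_le_convex_comb Q_nonneg Q_sum) (simp add: finite_lists_length)
  have "(\<Sum>xs | length xs = i. causal_prod K xs * (\<Sum>z\<in>UNIV. Min (range (G xs z))))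
      \<le> (\<Sum>xs | length xs = i. causal_prod K xs *
          (\<Sum>z\<in>UNIV. \<Sum>ys | length ys = m. Q xs z ys * G xs z (H (zs xs @ z # zs ys))))"
    by (intro sum_mono mult_left_mono estimator_average causal_prod_nonneg K_nonneg)
  also have "\<dots> = (\<Sum>es | length es = n. causal_prod K es * D (fst (es ! i)) (H (zs es)))"
    unfolding n sum_lists_length_split by (intro sum.cong refl) (simp_all add: inner nth_append zs_append_Cons)
  finally show ?thesis by (simp add: G_def zs_def)
qed

text \<open>A transcript of the code is encoded as one list of quadruples (s, y, z1, z2); this is
  the law of time j given the past transcript p, for messages w1 and w2.\<close>

definition mac_kernel ::
  "('s \<Rightarrow> real) \<Rightarrow> ('x1 \<Rightarrow> 'x2 \<Rightarrow> 's \<Rightarrow> 'y \<Rightarrow> 'z1 \<Rightarrow> 'z2 \<Rightarrow> real)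
   \<Rightarrow> (nat \<Rightarrow> nat \<Rightarrow> 'z1 list \<Rightarrow> 'x1) \<Rightarrow> (nat \<Rightarrow> nat \<Rightarrow> 'z2 list \<Rightarrow> 'x2) \<Rightarrow> nat \<Rightarrow> nat
   \<Rightarrow> nat \<Rightarrow> ('s \<times> 'y \<times> 'z1 \<times> 'z2) list \<Rightarrow> 's \<times> 'y \<times> 'z1 \<times> 'z2 \<Rightarrow> real" where
  "mac_kernel PS W phi1 phi2 w1 w2 j p = (\<lambda>(s, y, z). PS s *
     W (phi1 j w1 (map (fst \<circ> snd \<circ> snd) p)) (phi2 j w2 (map (snd \<circ> snd \<circ> snd) p)) s y (fst z) (snd z))"

lemma sum_seqs_zip4:
  fixes g :: "'a::finite list \<Rightarrow> 'b::finite list \<Rightarrow> 'c::finite list \<Rightarrow> 'd::finite list \<Rightarrow> real"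
  shows "(\<Sum>as\<in>seqs n. \<Sum>bs\<in>seqs n. \<Sum>cs\<in>seqs n. \<Sum>ds\<in>seqs n. g as bs cs ds) =
    (\<Sum>es | length es = n.
       g (map fst es) (map (fst \<circ> snd) es) (map (fst \<circ> snd \<circ> snd) es) (map (snd \<circ> snd \<circ> snd) es))"
proof -
  define unzip4 where "unzip4 es =
    (map fst es, map (fst \<circ> snd) es, map (fst \<circ> snd \<circ> snd) es, map (snd \<circ> snd \<circ> snd) es)"
    for es :: "('a \<times> 'b \<times> 'c \<times> 'd) list"
  have "bij_betw unzip4 {es. length es = n} (seqs n \<times> seqs n \<times> seqs n \<times> seqs n)"
    unfolding unzip4_def seqs_def
    by (rule bij_betw_byWitness[where f'="\<lambda>(as, bs, cs, ds). zip as (zip bs (zip cs ds))"])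
      (auto simp: image_def zip_map_fst_snd map_fst_zip map_snd_zip comp_def intro!: nth_equalityI)
  then show ?thesis
    by (simp add: sum.reindex_bij_betw[symmetric] sum.cartesian_product split_def unzip4_def)
qed

lemma expect_eq_causal_prod:
  fixes PS :: "'s1::finite \<times> 's2::finite \<Rightarrow> real"
    and W :: "'x1 \<Rightarrow> 'x2 \<Rightarrow> 's1 \<times> 's2 \<Rightarrow> 'y::finite \<Rightarrow> 'z1::finite \<Rightarrow> 'z2::finite \<Rightarrow> real"
  shows "expect n M1 M2 PS W phi1 phi2 f = (\<Sum>w1<M1. \<Sum>w2<M2. 1 / real M1 * (1 / real M2) *
     (\<Sum>es | length es = n. causal_prod (mac_kernel PS W phi1 phi2 w1 w2) es *
        f w1 w2 (map fst es) (map (fst \<circ> snd) es) (map (fst \<circ> snd \<circ> snd) es) (map (snd \<circ> snd \<circ> snd) es)))"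
  unfolding expect_def sum_seqs_zip4 sum_distrib_left
  by (intro sum.cong refl)
    (auto simp: joint_prob_def causal_prod_def mac_kernel_def enc_sym_def take_map split_def)

definition estimation_cost ::
  "('s \<Rightarrow> real) \<Rightarrow> ('x1 \<Rightarrow> 'x2 \<Rightarrow> 's \<Rightarrow> 'y::finite \<Rightarrow> 'z1::finite \<Rightarrow> 'z2::finite \<Rightarrow> real)
   \<Rightarrow> ('s::finite \<Rightarrow> 'h::finite \<Rightarrow> real) \<Rightarrow> 'x1 \<Rightarrow> 'x2 \<Rightarrow> real" where
  "estimation_cost PS W D x1 x2 = (\<Sum>z1\<in>UNIV. \<Sum>z2\<in>UNIV.
     Min (range (\<lambda>h. \<Sum>s\<in>UNIV. PS s * (\<Sum>y\<in>UNIV. W x1 x2 s y z1 z2) * D s h)))"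

lemma cost1_eq_estimation_cost: "cost1 PS W d1 = estimation_cost PS W (\<lambda>s. d1 (fst s))"
  by (simp add: fun_eq_iff cost1_def estimation_cost_def)

lemma cost2_eq_estimation_cost: "cost2 PS W d2 = estimation_cost PS W (\<lambda>s. d2 (snd s))"
  by (simp add: fun_eq_iff cost2_def estimation_cost_def)

lemma expect_cmult: "expect n M1 M2 PS W phi1 phi2 (\<lambda>w1 w2 ss ys z1s z2s. c * f w1 w2 ss ys z1s z2s) =
    c * expect n M1 M2 PS W phi1 phi2 f"
  by (simp add: expect_def sum_distrib_left mult_ac)

lemma expect_sum: "expect n M1 M2 PS W phi1 phi2 (\<lambda>w1 w2 ss ys z1s z2s. \<Sum>i\<in>I. f i w1 w2 ss ys z1s z2s) =
    (\<Sum>i\<in>I. expect n M1 M2 PS W phi1 phi2 (f i))"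
  by (simp add: expect_def sum_distrib_left sum.swap[of _ I])

lemma expect_estimation_cost_le_distortion:
  fixes PS :: "'s1::finite \<times> 's2::finite \<Rightarrow> real"
    and W :: "'x1 \<Rightarrow> 'x2 \<Rightarrow> 's1 \<times> 's2 \<Rightarrow> 'y::finite \<Rightarrow> 'z1::finite \<Rightarrow> 'z2::finite \<Rightarrow> real"
    and D :: "'s1 \<times> 's2 \<Rightarrow> 'h::finite \<Rightarrow> real" and H :: "nat \<Rightarrow> nat \<Rightarrow> 'z1 list \<Rightarrow> 'z2 list \<Rightarrow> 'h"
  assumes PS: "is_pmf_fun PS" and W: "\<And>x1 x2 s. is_pmf_fun (\<lambda>(y, z1, z2). W x1 x2 s y z1 z2)"
    and "i < n"
  shows "expect n M1 M2 PS W phi1 phi2 (\<lambda>w1 w2 ss ys z1s z2s.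
      estimation_cost PS W D (enc_sym phi1 w1 z1s i) (enc_sym phi2 w2 z2s i))
    \<le> expect n M1 M2 PS W phi1 phi2 (\<lambda>w1 w2 ss ys z1s z2s. D (ss ! i) (H w1 w2 z1s z2s))"
proof -
  have per_message: "(\<Sum>es | length es = n. causal_prod (mac_kernel PS W phi1 phi2 w1 w2) es *
        estimation_cost PS W D (phi1 i w1 (take i (map (fst \<circ> snd \<circ> snd) es)))
          (phi2 i w2 (take i (map (snd \<circ> snd \<circ> snd) es))))
    \<le> (\<Sum>es | length es = n. causal_prod (mac_kernel PS W phi1 phi2 w1 w2) es *
        D (map fst es ! i) (H w1 w2 (map (fst \<circ> snd \<circ> snd) es) (map (snd \<circ> snd \<circ> snd) es)))"
    for w1 w2
  proof -
    define V where "V j zs s y z = W (phi1 j w1 (map fst zs)) (phi2 j w2 (map snd zs)) s y (fst z) (snd z)"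
      for j zs s y and z :: "'z1 \<times> 'z2"
    have K: "mac_kernel PS W phi1 phi2 w1 w2 = (\<lambda>j p (s, y, z). PS s * V j (map (snd \<circ> snd) p) s y z)"
      by (simp add: fun_eq_iff mac_kernel_def V_def map_map comp_def)
    have V_pmf: "is_pmf_fun (\<lambda>(y, z). V j zs s y z)" for j zs s
      using W unfolding V_def split_def by simp
    have cost: "estimation_cost PS W D (phi1 i w1 (map fst zs)) (phi2 i w2 (map snd zs)) =
        (\<Sum>z\<in>UNIV. Min (range (\<lambda>h. \<Sum>s\<in>UNIV. PS s * (\<Sum>y\<in>UNIV. V i zs s y z) * D s h)))" for zs
      by (simp add: estimation_cost_def V_def sum.cartesian_product UNIV_Times_UNIV[symmetric] split_def
          del: UNIV_Times_UNIV)
    have K_sum: "(\<Sum>e\<in>UNIV. mac_kernel PS W phi1 phi2 w1 w2 j p e) = 1" for j p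
      using pmf_kernel_sum_eq_1[OF PS V_pmf] by (simp add: K split_def)
    have "(\<Sum>es | length es = n. causal_prod (mac_kernel PS W phi1 phi2 w1 w2) es *
          estimation_cost PS W D (phi1 i w1 (take i (map (fst \<circ> snd \<circ> snd) es)))
            (phi2 i w2 (take i (map (snd \<circ> snd \<circ> snd) es))))
      = (\<Sum>xs | length xs = i. causal_prod (mac_kernel PS W phi1 phi2 w1 w2) xs *
          (\<Sum>z\<in>UNIV. Min (range (\<lambda>h. \<Sum>s\<in>UNIV. PS s * (\<Sum>y\<in>UNIV. V i (map (snd \<circ> snd) xs) s y z) * D s h))))"
      unfolding take_map cost[symmetric]
      using causal_prod_marginal[OF K_sum, where m = i and n = n and F = "\<lambda>xs. estimation_cost PS W D
          (phi1 i w1 (map (fst \<circ> snd \<circ> snd) xs)) (phi2 i w2 (map (snd \<circ> snd \<circ> snd) xs))"] \<open>i < n\<close>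
      by (simp add: map_map comp_def)
    also have "\<dots> \<le> (\<Sum>es | length es = n. causal_prod (mac_kernel PS W phi1 phi2 w1 w2) es *
        D (fst (es ! i)) (H w1 w2 (map fst (map (snd \<circ> snd) es)) (map snd (map (snd \<circ> snd) es))))"
      using causal_estimation_bound[OF PS V_pmf \<open>i < n\<close>,
          where D = D and H = "\<lambda>zs. H w1 w2 (map fst zs) (map snd zs)"]
      by (simp only: K)
    also have "\<dots> = (\<Sum>es | length es = n. causal_prod (mac_kernel PS W phi1 phi2 w1 w2) es *
        D (map fst es ! i) (H w1 w2 (map (fst \<circ> snd \<circ> snd) es) (map (snd \<circ> snd \<circ> snd) es)))"
      using \<open>i < n\<close> by (intro sum.cong refl) (simp add: map_map comp_def)
    finally show ?thesis .
  qed
  show ?thesis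
    unfolding expect_eq_causal_prod enc_sym_def
    by (intro per_message sum_mono mult_left_mono) simp
qed

lemma average_distortion_ge_estimation_cost:
  fixes PS :: "'s1::finite \<times> 's2::finite \<Rightarrow> real"
    and W :: "'x1 \<Rightarrow> 'x2 \<Rightarrow> 's1 \<times> 's2 \<Rightarrow> 'y::finite \<Rightarrow> 'z1::finite \<Rightarrow> 'z2::finite \<Rightarrow> real"
    and D :: "'s1 \<times> 's2 \<Rightarrow> 'h::finite \<Rightarrow> real" and H :: "nat \<Rightarrow> nat \<Rightarrow> nat \<Rightarrow> 'z1 list \<Rightarrow> 'z2 list \<Rightarrow> 'h"
  assumes "is_pmf_fun PS" and "\<And>x1 x2 s. is_pmf_fun (\<lambda>(y, z1, z2). W x1 x2 s y z1 z2)"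
  shows "(1 / real n) * (\<Sum>i<n. expect n M1 M2 PS W phi1 phi2 (\<lambda>w1 w2 ss ys z1s z2s.
      estimation_cost PS W D (enc_sym phi1 w1 z1s i) (enc_sym phi2 w2 z2s i)))
    \<le> expect n M1 M2 PS W phi1 phi2 (\<lambda>w1 w2 ss ys z1s z2s.
      (1 / real n) * (\<Sum>i<n. D (ss ! i) (H i w1 w2 z1s z2s)))"
  unfolding expect_cmult expect_sum
  by (intro mult_left_mono sum_mono expect_estimation_cost_le_distortion[OF assms]) simp_all

theorem mainTheorem5:
  fixes n :: nat and R1 R2 :: real
    and PS :: "'s1::finite \<times> 's2::finite \<Rightarrow> real"
    and W :: "'x1::finite \<Rightarrow> 'x2::finite \<Rightarrow> 's1 \<times> 's2 \<Rightarrow> 'y::finite \<Rightarrow> 'z1::finite \<Rightarrow> 'z2::finite \<Rightarrow> real"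
    and d1 :: "'s1 \<Rightarrow> 'h1::finite \<Rightarrow> real" and d2 :: "'s2 \<Rightarrow> 'h2::finite \<Rightarrow> real"
    and phi1 :: "nat \<Rightarrow> nat \<Rightarrow> 'z1 list \<Rightarrow> 'x1" and phi2 :: "nat \<Rightarrow> nat \<Rightarrow> 'z2 list \<Rightarrow> 'x2"
    and psi1 :: "nat \<Rightarrow> 'x1 list \<Rightarrow> 'z1 list \<Rightarrow> 'h1"
    and psi2 :: "nat \<Rightarrow> 'x2 list \<Rightarrow> 'z2 list \<Rightarrow> 'h2"
  assumes "0 \<le> R1" and "0 \<le> R2"
    and "is_pmf_fun PS"
    and "\<And>x1 x2 s. is_pmf_fun (\<lambda>(y, z1, z2). W x1 x2 s y z1 z2)"
    and "\<And>s h. 0 \<le> d1 s h" and "\<And>s h. 0 \<le> d2 s h"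
  defines "M1 \<equiv> num_msgs n R1" and "M2 \<equiv> num_msgs n R2"
  shows "(expect n M1 M2 PS W phi1 phi2
           (\<lambda>w1 w2 ss ys z1s z2s. (1 / real n) *
              (\<Sum>i<n. d1 (fst (ss ! i)) (psi1 i (enc_seq n phi1 w1 z1s) z1s)))
         \<ge> (1 / real n) * (\<Sum>i<n. expect n M1 M2 PS W phi1 phi2
              (\<lambda>w1 w2 ss ys z1s z2s. cost1 PS W d1 (enc_sym phi1 w1 z1s i) (enc_sym phi2 w2 z2s i))))
    \<and> (expect n M1 M2 PS W phi1 phi2
           (\<lambda>w1 w2 ss ys z1s z2s. (1 / real n) *
              (\<Sum>i<n. d2 (snd (ss ! i)) (psi2 i (enc_seq n phi2 w2 z2s) z2s)))
         \<ge> (1 / real n) * (\<Sum>i<n. expect n M1 M2 PS W phi1 phi2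
              (\<lambda>w1 w2 ss ys z1s z2s. cost2 PS W d2 (enc_sym phi1 w1 z1s i) (enc_sym phi2 w2 z2s i))))"
proof -
  note bound = average_distortion_ge_estimation_cost[where PS = PS and W = W,
      OF assms(3,4)]
  show ?thesis
    using bound[where D = "\<lambda>s. d1 (fst s)" and H = "\<lambda>i w1 w2 z1s z2s. psi1 i (enc_seq n phi1 w1 z1s) z1s"]
      bound[where D = "\<lambda>s. d2 (snd s)" and H = "\<lambda>i w1 w2 z1s z2s. psi2 i (enc_seq n phi2 w2 z2s) z2s"]
    by (simp add: cost1_eq_estimation_cost cost2_eq_estimation_cost)
qed

end
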